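(* Let $\mu$ be a reservoir distribution, $\beta\in[0,1]$, $\mathrm{Cost}\in\mathbb{R}$, $B$ an increasing sequence of positive integers, and $\mathcal{A}$ a $B$-batch-compressed $N$-sample algorithm. Suppose $\mathbb{A}$ is an adaptive randomness distorting adversary with $\mathrm{strength}(\mathbb{A})\le\mathrm{Cost}$ whose declarations ensure that, whenever all declarations hold, the output of $\mathcal{A}$ satisfies $p_{i^*}\le\beta$ almost surely. Then \[ \mathbb{P}^{\mu,\mathcal{A}}[p_{i^*}\le\beta]\ \ge\ e^{-\mathrm{Cost}}, \] where the left side is the true (undistorted) probability when $\mathcal{A}$ runs on reservoir $\mu$.
   Context: Infinite-armed Bernoulli bandit: arms $a_1,a_2,\dots$ with means $p_i$ drawn i.i.d. from a reservoir distribution $\mu$ (a probability measure on $[0,1]$), each sample of $a_i$ returning an independent Bernoulli$(p_i)$ reward. An algorithm is $B$-batch-compressed (for increasing positive integers $B=(b_1,b_2,\dots)$) if it acts only by raising the number of samples $n_i$ of some arm from $b_k$ to $b_{k+1}$ (or from $0$ to $b_1$), collecting that batch of new samples; it finally outputs an arm $a_{i^*}$. Bayesian viewpoint: $\mu$ is known to both algorithm and adversary, and at time $t$ the posterior of $(p_1,p_2,\dots)$ given the observed rewards is the product of posteriors $\mu_{i,t}$ (where $\mu_{i,t}(dx)\propto x^{R}(1-x)^{n-R}\mu(dx)$ if arm $i$ has $n$ samples with total reward $R$); this posterior $\boldsymbol{\mu}^t$ determines the conditional law of the next batch's outcomes and of $p_{i^*}$. An adaptive randomness distorting adversary $\mathbb{A}$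 may, each time $\mathcal{A}$ requests a batch, declare (based on the history) an event restricting the possible outcomes of that batch, and, when $\mathcal{A}$ outputs $a_{i^*}$, declare an event restricting the possible value of $p_{i^*}$; the process then continues conditioned on the declared events holding. If a declaration made at time $s$ has probability $P_s$ under the current posterior $\boldsymbol{\mu}^s$, its cost is $\log(1/P_s)$; the total cost is $\mathrm{Cost}_N=\sum_s\log(1/P_s)$, and $\mathrm{strength}(\mathbb{A})\le\mathrm{Cost}$ means $\mathrm{Cost}_N\le\mathrm{Cost}$ almost surely. *)

theory Defs
  imports "HOL-Probability.Probability"
begin

text \<open>Bayesian model of a B-batch-compressed algorithm on the infinite-armed
Bernoulli bandit with reservoir distribution mu. A history is the list of batches
requested so far: (arm index, list of the Bernoulli outcomes of that batch).\<close>

datatype act = Sample nat | Output nat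

type_synonym hist = "(nat \<times> bool list) list"

definition reservoir :: "real measure \<Rightarrow> bool" where
  "reservoir \<mu> \<longleftrightarrow> prob_space \<mu> \<and> sets \<mu> = sets borel \<and> measure \<mu> {0..1} = 1"

definition batch_seq :: "(nat \<Rightarrow> nat) \<Rightarrow> bool" where
  "batch_seq B \<longleftrightarrow> strict_mono B \<and> 0 < B 0"

definition arm_n :: "hist \<Rightarrow> nat \<Rightarrow> nat" where
  "arm_n h i = (\<Sum>(j,\<omega>)\<leftarrow>h. if j = i then length \<omega> else 0)"

definition arm_R :: "hist \<Rightarrow> nat \<Rightarrow> nat" where
  "arm_R h i = (\<Sum>(j,\<omega>)\<leftarrow>h. if j = i then length (filter id \<omega>) else 0)"

definition total_samples :: "hist \<Rightarrow> nat" where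
  "total_samples h = (\<Sum>(j,\<omega>)\<leftarrow>h. length \<omega>)"

text \<open>B 0 = b_1, B 1 = b_2, ...: the next level after n samples (n = 0 or n = b_k)\<close>
definition next_level :: "(nat \<Rightarrow> nat) \<Rightarrow> nat \<Rightarrow> nat" where
  "next_level B n = (if n = 0 then B 0 else B (Suc (THE k. B k = n)))"

definition batch_size :: "(nat \<Rightarrow> nat) \<Rightarrow> hist \<Rightarrow> nat \<Rightarrow> nat" where
  "batch_size B h i = next_level B (arm_n h i) - arm_n h i"

definition W :: "real measure \<Rightarrow> nat \<Rightarrow> nat \<Rightarrow> real" where
  "W \<mu> n R = (\<integral>x. x ^ R * (1 - x) ^ (n - R) \<partial>\<mu>)"

text \<open>posterior predictive probability that the next batch of arm i is exactly \<omega>\<close>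
definition pred :: "real measure \<Rightarrow> hist \<Rightarrow> nat \<Rightarrow> bool list \<Rightarrow> real" where
  "pred \<mu> h i \<omega> =
     W \<mu> (arm_n h i + length \<omega>) (arm_R h i + length (filter id \<omega>)) / W \<mu> (arm_n h i) (arm_R h i)"

definition post :: "real measure \<Rightarrow> hist \<Rightarrow> nat \<Rightarrow> real set \<Rightarrow> real" where
  "post \<mu> h i S =
     (\<integral>x. indicator S x * x ^ arm_R h i * (1 - x) ^ (arm_n h i - arm_R h i) \<partial>\<mu>) / W \<mu> (arm_n h i) (arm_R h i)"

definition decl_prob :: "real measure \<Rightarrow> (nat \<Rightarrow> nat) \<Rightarrow> hist \<Rightarrow> nat \<Rightarrow> bool list set \<Rightarrow> real" where
  "decl_prob \<mu> B h i E = (\<Sum>\<omega>\<in>{\<omega>. length \<omega> = batch_size B h i} \<inter> E. pred \<mu> h i \<omega>)"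

definition N_sample_alg :: "(nat \<Rightarrow> nat) \<Rightarrow> nat \<Rightarrow> (hist \<Rightarrow> act pmf) \<Rightarrow> bool" where
  "N_sample_alg B N alg \<longleftrightarrow>
     (\<forall>h i. Sample i \<in> set_pmf (alg h) \<longrightarrow> total_samples h + batch_size B h i \<le> N)"

text \<open>Probability (true, undistorted, Bayesian) that the output arm has p \<le> \<beta>, starting
from history h, with step budget k.\<close>
fun true_val :: "real measure \<Rightarrow> (nat \<Rightarrow> nat) \<Rightarrow> (hist \<Rightarrow> act pmf) \<Rightarrow> real \<Rightarrow> nat \<Rightarrow> hist \<Rightarrow> real" where
  "true_val \<mu> B alg \<beta> 0 h = 0"
| "true_val \<mu> B alg \<beta> (Suc k) h =
     measure_pmf.expectation (alg h) (\<lambda>a. case a of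
        Output i \<Rightarrow> post \<mu> h i {x. x \<le> \<beta>}
      | Sample i \<Rightarrow> (\<Sum>\<omega>\<in>{\<omega>. length \<omega> = batch_size B h i}.
                        pred \<mu> h i \<omega> * true_val \<mu> B alg \<beta> k (h @ [(i, \<omega>)])))"

text \<open>P^{mu,A}[p_{i*} \<le> \<beta>] for an N-sample algorithm (it halts within N+1 steps).\<close>
definition success_prob :: "real measure \<Rightarrow> (nat \<Rightarrow> nat) \<Rightarrow> nat \<Rightarrow> (hist \<Rightarrow> act pmf) \<Rightarrow> real \<Rightarrow> real" where
  "success_prob \<mu> B N alg \<beta> = true_val \<mu> B alg \<beta> (Suc N) []"

text \<open>Histories reachable (with positive probability) in the distorted process, together with
the cost accumulated so far. advB h i is the event declared on the next batch of arm i.\<close>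
inductive dreach :: "real measure \<Rightarrow> (nat \<Rightarrow> nat) \<Rightarrow> (hist \<Rightarrow> act pmf) \<Rightarrow>
    (hist \<Rightarrow> nat \<Rightarrow> bool list set) \<Rightarrow> hist \<Rightarrow> real \<Rightarrow> bool"
  for \<mu> B alg advB where
  start: "dreach \<mu> B alg advB [] 0"
| step: "dreach \<mu> B alg advB h c \<Longrightarrow> Sample i \<in> set_pmf (alg h) \<Longrightarrow>
         length \<omega> = batch_size B h i \<Longrightarrow> \<omega> \<in> advB h i \<Longrightarrow> pred \<mu> h i \<omega> > 0 \<Longrightarrow>
         dreach \<mu> B alg advB (h @ [(i, \<omega>)]) (c + ln (1 / decl_prob \<mu> B h i (advB h i)))"

text \<open>strength(adversary) \<le> Cost: almost surely all declarations have positive probability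
and the total cost is at most Cost. advF h i is the event declared on p_i when arm i is output.\<close>
definition strength_le :: "real measure \<Rightarrow> (nat \<Rightarrow> nat) \<Rightarrow> (hist \<Rightarrow> act pmf) \<Rightarrow>
    (hist \<Rightarrow> nat \<Rightarrow> bool list set) \<Rightarrow> (hist \<Rightarrow> nat \<Rightarrow> real set) \<Rightarrow> real \<Rightarrow> bool" where
  "strength_le \<mu> B alg advB advF Cost \<longleftrightarrow>
     (\<forall>h c i. dreach \<mu> B alg advB h c \<and> Sample i \<in> set_pmf (alg h) \<longrightarrow>
         decl_prob \<mu> B h i (advB h i) > 0) \<and>
     (\<forall>h c i. dreach \<mu> B alg advB h c \<and> Output i \<in> set_pmf (alg h) \<longrightarrow>
         advF h i \<in> sets borel \<and> post \<mu> h i (advF h i) > 0 \<and>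
         c + ln (1 / post \<mu> h i (advF h i)) \<le> Cost)"

definition ensures_le :: "real measure \<Rightarrow> (nat \<Rightarrow> nat) \<Rightarrow> (hist \<Rightarrow> act pmf) \<Rightarrow>
    (hist \<Rightarrow> nat \<Rightarrow> bool list set) \<Rightarrow> (hist \<Rightarrow> nat \<Rightarrow> real set) \<Rightarrow> real \<Rightarrow> bool" where
  "ensures_le \<mu> B alg advB advF \<beta> \<longleftrightarrow>
     (\<forall>h c i. dreach \<mu> B alg advB h c \<and> Output i \<in> set_pmf (alg h) \<longrightarrow>
         post \<mu> h i (advF h i \<inter> {x. \<beta> < x}) = 0)"

end

theory Submission
  imports Defs
begin

text \<open>
  Follow the undistorted process along histories that the distorted process can reach, keeping
  track of the cost c accumulated so far: by induction on the remaining sample budget, the true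
  success probability from such a history is at least exp (c - Cost). When an arm is output, the
  final declaration F has posterior mass P with c + ln (1/P) \<le> Cost and no posterior mass
  above \<beta>, so the posterior mass of p \<le> \<beta> is at least P \<ge> exp (c - Cost). When a batch is
  requested, the declared event has predictive probability D and each outcome in it raises the cost
  by ln (1/D); by induction those outcomes succeed with probability at least exp (c - Cost) / D,
  which averages to at least exp (c - Cost) over all outcomes.
\<close>

lemma reservoir_AE_unit_interval:
  assumes "reservoir \<mu>"
  shows "AE x in \<mu>. 0 \<le> x \<and> x \<le> 1"
proof -
  interpret prob_space \<mu>
    using assms by (simp add: reservoir_def)
  have "AE x in \<mu>. x \<in> {0..1}"
    using assms by (intro AE_prob_1) (simp add: reservoir_def)
  then show ?thesis
    by simp
qed

lemma likelihood_bounds: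
  fixes x :: real
  assumes "0 \<le> x" "x \<le> 1"
  shows "0 \<le> x ^ a * (1 - x) ^ b" "x ^ a * (1 - x) ^ b \<le> 1"
  using assms by (simp_all add: mult_le_one power_le_one)

lemma integrable_indicator_likelihood:
  assumes "reservoir \<mu>" "S \<in> sets borel"
  shows "integrable \<mu> (\<lambda>x. indicator S x * x ^ a * (1 - x) ^ b :: real)"
proof -
  interpret prob_space \<mu>
    using assms by (simp add: reservoir_def)
  have "sets \<mu> = sets borel"
    using assms by (simp add: reservoir_def)
  then have "(\<lambda>x. indicator S x * x ^ a * (1 - x) ^ b :: real) \<in> borel_measurable \<mu>"
    using assms(2) by (simp cong: measurable_cong_sets)
  moreover have "AE x in \<mu>. norm (indicator S x * x ^ a * (1 - x) ^ b :: real) \<le> 1"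
    using reservoir_AE_unit_interval[OF assms(1)]
    by eventually_elim (use likelihood_bounds in \<open>auto simp: indicator_def\<close>)
  ultimately show ?thesis
    by (intro integrable_const_bound)
qed

lemma integrable_likelihood:
  assumes "reservoir \<mu>"
  shows "integrable \<mu> (\<lambda>x. x ^ a * (1 - x) ^ b :: real)"
  using integrable_indicator_likelihood[OF assms, of UNIV] by simp

lemma W_nonneg:
  assumes "reservoir \<mu>"
  shows "0 \<le> W \<mu> n R"
proof -
  have "AE x in \<mu>. 0 \<le> x ^ R * (1 - x) ^ (n - R)"
    using reservoir_AE_unit_interval[OF assms] by eventually_elim (simp add: likelihood_bounds)
  then show ?thesis
    unfolding W_def by (rule integral_nonneg_AE)
qed

lemma pred_nonneg:
  assumes "reservoir \<mu>"
  shows "0 \<le> pred \<mu> h i \<omega>"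
  unfolding pred_def by (simp add: W_nonneg[OF assms])

lemma post_nonneg:
  assumes "reservoir \<mu>"
  shows "0 \<le> post \<mu> h i S"
proof -
  have "AE x in \<mu>. 0 \<le> indicator S x * x ^ arm_R h i * (1 - x) ^ (arm_n h i - arm_R h i)"
    using reservoir_AE_unit_interval[OF assms] by eventually_elim (simp add: likelihood_bounds)
  then show ?thesis
    unfolding post_def by (intro divide_nonneg_nonneg W_nonneg[OF assms] integral_nonneg_AE)
qed

lemma post_le_add:
  assumes "reservoir \<mu>" "S \<in> sets borel" "T \<in> sets borel" "A \<subseteq> S \<union> T"
  shows "post \<mu> h i A \<le> post \<mu> h i S + post \<mu> h i T"
proof -
  define lik where "lik X x = indicator X x * x ^ arm_R h i * (1 - x) ^ (arm_n h i - arm_R h i)"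
    for X and x :: real
  have int: "integrable \<mu> (lik S)" "integrable \<mu> (lik T)"
    unfolding lik_def using assms by (simp_all add: integrable_indicator_likelihood)
  have "integral\<^sup>L \<mu> (lik A) \<le> (\<integral>x. lik S x + lik T x \<partial>\<mu>)"
    using reservoir_AE_unit_interval[OF assms(1)]
  proof (intro integral_mono_AE' Bochner_Integration.integrable_add int; eventually_elim)
    fix x :: real assume "0 \<le> x \<and> x \<le> 1"
    then show "lik A x \<le> lik S x + lik T x" "0 \<le> lik S x + lik T x"
      using likelihood_bounds[of x] assms(4) by (auto simp: lik_def indicator_def)
  qed
  also have "\<dots> = integral\<^sup>L \<mu> (lik S) + integral\<^sup>L \<mu> (lik T)"
    using int by (rule Bochner_Integration.integral_add)
  finally show ?thesis
    unfolding post_def lik_def[abs_def]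
    by (simp add: W_nonneg[OF assms(1)] divide_right_mono flip: add_divide_distrib)
qed

lemma post_le_1:
  assumes "reservoir \<mu>"
  shows "post \<mu> h i A \<le> 1"
proof -
  have "post \<mu> h i A \<le> post \<mu> h i UNIV + post \<mu> h i {}"
    using assms by (intro post_le_add) auto
  also have "\<dots> \<le> 1"
    by (simp add: post_def W_def[symmetric] divide_le_eq_1)
  finally show ?thesis .
qed

lemma bool_lists_length_Suc:
  "{\<omega> :: bool list. length \<omega> = Suc m} = (#) True ` {\<omega>. length \<omega> = m} \<union> (#) False ` {\<omega>. length \<omega> = m}"
  by (auto simp: length_Suc_conv)

lemma finite_bool_lists_length: "finite {\<omega> :: bool list. length \<omega> = m}"
  using finite_lists_length_eq[of "UNIV :: bool set" m] by simp

lemma sum_Bernoulli_lists: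
  fixes x :: real
  shows "(\<Sum>\<omega> | length \<omega> = m. x ^ length (filter id \<omega>) * (1 - x) ^ (m - length (filter id \<omega>))) = 1"
proof (induction m)
  case (Suc m)
  let ?L = "{\<omega> :: bool list. length \<omega> = m}"
  let ?g = "\<lambda>m \<omega>. x ^ length (filter id \<omega>) * (1 - x) ^ (m - length (filter id \<omega>))"
  have count_le: "length (filter id \<omega>) \<le> m" if "\<omega> \<in> ?L" for \<omega>
    using that length_filter_le[of id \<omega>] by simp
  have "(\<Sum>\<omega> | length \<omega> = Suc m. ?g (Suc m) \<omega>)
      = (\<Sum>\<omega>\<in>?L. ?g (Suc m) (True # \<omega>)) + (\<Sum>\<omega>\<in>?L. ?g (Suc m) (False # \<omega>))"
    unfolding bool_lists_length_Suc
    by (subst sum.union_disjoint) (auto simp: finite_bool_lists_length sum.reindex)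
  also have "\<dots> = x * (\<Sum>\<omega>\<in>?L. ?g m \<omega>) + (1 - x) * (\<Sum>\<omega>\<in>?L. ?g m \<omega>)"
    by (auto simp: sum_distrib_left Suc_diff_le count_le mult_ac
        intro!: arg_cong2[where f = "(+)"] sum.cong)
  also have "\<dots> = 1"
    unfolding Suc.IH by simp
  finally show ?case .
qed simp

lemma sum_W_extend:
  assumes "reservoir \<mu>" "R \<le> n"
  shows "(\<Sum>\<omega> | length \<omega> = m. W \<mu> (n + m) (R + length (filter id \<omega>))) = W \<mu> n R"
proof -
  let ?L = "{\<omega> :: bool list. length \<omega> = m}"
  define f where "f \<omega> x = x ^ R * (1 - x) ^ (n - R)
      * (x ^ length (filter id \<omega>) * (1 - x) ^ (m - length (filter id \<omega>)))" for \<omega> and x :: real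
  have W_eq: "W \<mu> (n + m) (R + length (filter id \<omega>)) = integral\<^sup>L \<mu> (f \<omega>)" if "\<omega> \<in> ?L" for \<omega>
  proof -
    have "n + m - (R + length (filter id \<omega>)) = (n - R) + (m - length (filter id \<omega>))"
      using that assms(2) length_filter_le[of id \<omega>] by simp
    then show ?thesis
      unfolding W_def f_def by (simp add: power_add mult_ac)
  qed
  have int: "integrable \<mu> (f \<omega>)" for \<omega>
    using integrable_likelihood[OF assms(1), of "R + length (filter id \<omega>)" "n - R + (m - length (filter id \<omega>))"]
    unfolding f_def by (simp add: power_add mult_ac)
  have "(\<Sum>\<omega>\<in>?L. W \<mu> (n + m) (R + length (filter id \<omega>))) = (\<Sum>\<omega>\<in>?L. integral\<^sup>L \<mu> (f \<omega>))"
    using W_eq by (rule sum.cong[OF refl])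
  also have "\<dots> = (\<integral>x. (\<Sum>\<omega>\<in>?L. f \<omega> x) \<partial>\<mu>)"
    using int by (rule Bochner_Integration.integral_sum[symmetric])
  also have "\<dots> = W \<mu> n R"
    unfolding W_def f_def by (simp add: sum_distrib_left[symmetric] sum_Bernoulli_lists)
  finally show ?thesis .
qed

lemma arm_n_snoc: "arm_n (h @ [(j, \<omega>)]) i = arm_n h i + (if j = i then length \<omega> else 0)"
  by (simp add: arm_n_def)

lemma arm_R_snoc: "arm_R (h @ [(j, \<omega>)]) i = arm_R h i + (if j = i then length (filter id \<omega>) else 0)"
  by (simp add: arm_R_def)

lemma total_samples_snoc: "total_samples (h @ [(j, \<omega>)]) = total_samples h + length \<omega>"
  by (simp add: total_samples_def)

lemma arm_R_le_arm_n: "arm_R h i \<le> arm_n h i"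
proof (induction h rule: rev_induct)
  case (snoc p h)
  then show ?case
    using length_filter_le by (cases p) (auto simp: arm_n_snoc arm_R_snoc intro: add_mono)
qed (simp add: arm_R_def arm_n_def)

lemma sum_pred_le_1:
  assumes "reservoir \<mu>"
  shows "(\<Sum>\<omega> | length \<omega> = m. pred \<mu> h i \<omega>) \<le> 1"
proof -
  have "(\<Sum>\<omega> | length \<omega> = m. pred \<mu> h i \<omega>)
      = (\<Sum>\<omega> | length \<omega> = m. W \<mu> (arm_n h i + m) (arm_R h i + length (filter id \<omega>)))
        / W \<mu> (arm_n h i) (arm_R h i)"
    unfolding pred_def sum_divide_distrib by simp
  also have "\<dots> = W \<mu> (arm_n h i) (arm_R h i) / W \<mu> (arm_n h i) (arm_R h i)"
    using assms arm_R_le_arm_n by (simp add: sum_W_extend)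
  also have "\<dots> \<le> 1"
    by (simp add: divide_le_eq_1)
  finally show ?thesis .
qed

definition action_value ::
    "real measure \<Rightarrow> (nat \<Rightarrow> nat) \<Rightarrow> (hist \<Rightarrow> act pmf) \<Rightarrow> real \<Rightarrow> nat \<Rightarrow> hist \<Rightarrow> act \<Rightarrow> real" where
  "action_value \<mu> B alg \<beta> k h a = (case a of
        Output i \<Rightarrow> post \<mu> h i {x. x \<le> \<beta>}
      | Sample i \<Rightarrow> (\<Sum>\<omega> | length \<omega> = batch_size B h i.
                        pred \<mu> h i \<omega> * true_val \<mu> B alg \<beta> k (h @ [(i, \<omega>)])))"

lemma true_val_Suc:
  "true_val \<mu> B alg \<beta> (Suc k) h = measure_pmf.expectation (alg h) (action_value \<mu> B alg \<beta> k h)"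
  by (simp add: action_value_def[abs_def])

lemma integrable_measure_pmf_bounded:
  fixes f :: "'a \<Rightarrow> real"
  assumes "\<And>a. \<bar>f a\<bar> \<le> K"
  shows "integrable (measure_pmf p) f"
  using assms by (intro measure_pmf.integrable_const_bound[where B = K]) auto

lemma action_value_bounds:
  assumes "reservoir \<mu>" and "\<And>h'. 0 \<le> true_val \<mu> B alg \<beta> k h' \<and> true_val \<mu> B alg \<beta> k h' \<le> 1"
  shows "0 \<le> action_value \<mu> B alg \<beta> k h a \<and> action_value \<mu> B alg \<beta> k h a \<le> 1"
proof (cases a)
  case (Output i)
  then show ?thesis
    using post_nonneg[OF assms(1)] post_le_1[OF assms(1)] by (simp add: action_value_def)
next
  case (Sample i)
  let ?L = "{\<omega> :: bool list. length \<omega> = batch_size B h i}"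
  let ?v = "\<lambda>\<omega>. true_val \<mu> B alg \<beta> k (h @ [(i, \<omega>)])"
  have "0 \<le> (\<Sum>\<omega>\<in>?L. pred \<mu> h i \<omega> * ?v \<omega>)"
    using pred_nonneg[OF assms(1)] assms(2) by (intro sum_nonneg mult_nonneg_nonneg) auto
  moreover have "(\<Sum>\<omega>\<in>?L. pred \<mu> h i \<omega> * ?v \<omega>) \<le> (\<Sum>\<omega>\<in>?L. pred \<mu> h i \<omega>)"
    using pred_nonneg[OF assms(1)] assms(2) by (intro sum_mono mult_left_le) auto
  moreover have "(\<Sum>\<omega>\<in>?L. pred \<mu> h i \<omega>) \<le> 1"
    using assms(1) by (rule sum_pred_le_1)
  ultimately show ?thesis
    using Sample by (simp add: action_value_def)
qed

lemma true_val_bounds: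
  assumes "reservoir \<mu>"
  shows "0 \<le> true_val \<mu> B alg \<beta> k h \<and> true_val \<mu> B alg \<beta> k h \<le> 1"
proof (induction k arbitrary: h)
  case (Suc k)
  have bounds: "0 \<le> action_value \<mu> B alg \<beta> k h a \<and> action_value \<mu> B alg \<beta> k h a \<le> 1" for a
    using assms Suc.IH by (rule action_value_bounds)
  then have "integrable (measure_pmf (alg h)) (action_value \<mu> B alg \<beta> k h)"
    by (intro integrable_measure_pmf_bounded[where K = 1]) (simp add: abs_le_iff)
  then show ?case
    unfolding true_val_Suc using bounds
    by (auto intro: measure_pmf.integral_ge_const measure_pmf.integral_le_const)
qed simp

lemma next_level_gt:
  assumes "batch_seq B" "n = 0 \<or> n \<in> range B"
  shows "n < next_level B n" "next_level B n \<in> range B"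
proof -
  have sm: "strict_mono B"
    using assms(1) by (simp add: batch_seq_def)
  have "n < next_level B n \<and> next_level B n \<in> range B"
  proof (cases "n = 0")
    case True
    then show ?thesis
      using assms(1) by (simp add: next_level_def batch_seq_def)
  next
    case False
    then obtain k where k: "B k = n"
      using assms(2) by auto
    have "(THE k'. B k' = n) = k"
      using k strict_mono_eq[OF sm] by (intro the_equality) auto
    then have "next_level B n = B (Suc k)"
      using False by (simp add: next_level_def)
    moreover have "B k < B (Suc k)"
      using sm by (simp add: strict_mono_Suc_iff)
    ultimately show ?thesis
      using k by auto
  qed
  then show "n < next_level B n" "next_level B n \<in> range B"
    by auto
qed

lemma dreach_arm_n_level:
  assumes "batch_seq B" "dreach \<mu> B alg advB h c"
  shows "arm_n h i = 0 \<or> arm_n h i \<in> range B"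
  using assms(2)
proof (induction rule: dreach.induct)
  case start
  then show ?case
    by (simp add: arm_n_def)
next
  case (step h c j \<omega>)
  then show ?case
    using next_level_gt[OF assms(1) step.IH]
    by (auto simp: arm_n_snoc batch_size_def)
qed

lemma dreach_batch_size_pos:
  assumes "batch_seq B" "dreach \<mu> B alg advB h c"
  shows "0 < batch_size B h i"
  using next_level_gt(1)[OF assms(1) dreach_arm_n_level[OF assms]] by (simp add: batch_size_def)

lemma exp_le_of_cost_le:
  fixes P c Cost :: real
  assumes "0 < P" "c + ln (1 / P) \<le> Cost"
  shows "exp (c - Cost) \<le> P"
proof -
  have "c - Cost \<le> ln P"
    using assms by (simp add: ln_div)
  then show ?thesis
    using assms(1) by (metis exp_le_cancel_iff exp_ln)
qed

lemma weighted_sum_ge_of_event_bound: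
  fixes p v :: "'a \<Rightarrow> real"
  assumes "finite L" "0 < (\<Sum>\<omega>\<in>L \<inter> E. p \<omega>)"
    and "\<And>\<omega>. \<omega> \<in> L \<Longrightarrow> 0 \<le> p \<omega>" "\<And>\<omega>. \<omega> \<in> L \<Longrightarrow> 0 \<le> v \<omega>"
    and "\<And>\<omega>. \<omega> \<in> L \<inter> E \<Longrightarrow> 0 < p \<omega> \<Longrightarrow> e / (\<Sum>\<omega>\<in>L \<inter> E. p \<omega>) \<le> v \<omega>"
  shows "e \<le> (\<Sum>\<omega>\<in>L. p \<omega> * v \<omega>)"
proof -
  let ?D = "\<Sum>\<omega>\<in>L \<inter> E. p \<omega>"
  have "e = ?D * (e / ?D)"
    using assms(2) by simp
  also have "\<dots> = (\<Sum>\<omega>\<in>L \<inter> E. p \<omega> * (e / ?D))"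
    by (rule sum_distrib_right)
  also have "\<dots> \<le> (\<Sum>\<omega>\<in>L \<inter> E. p \<omega> * v \<omega>)"
  proof (rule sum_mono)
    fix \<omega> assume \<omega>: "\<omega> \<in> L \<inter> E"
    show "p \<omega> * (e / ?D) \<le> p \<omega> * v \<omega>"
    proof (cases "p \<omega> = 0")
      case False
      then show ?thesis
        using \<omega> assms(3,5)[of \<omega>] by (intro mult_left_mono) auto
    qed simp
  qed
  also have "\<dots> \<le> (\<Sum>\<omega>\<in>L. p \<omega> * v \<omega>)"
    using assms(1,3,4) by (intro sum_mono2) auto
  finally show ?thesis .
qed

lemma output_value_ge_exp_cost:
  assumes "reservoir \<mu>" "strength_le \<mu> B alg advB advF Cost" "ensures_le \<mu> B alg advB advF \<beta>"
    and "dreach \<mu> B alg advB h c" "Output i \<in> set_pmf (alg h)"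
  shows "exp (c - Cost) \<le> post \<mu> h i {x. x \<le> \<beta>}"
proof -
  have F: "advF h i \<in> sets borel" "0 < post \<mu> h i (advF h i)"
    "c + ln (1 / post \<mu> h i (advF h i)) \<le> Cost"
    using assms(2,4,5) unfolding strength_le_def by blast+
  have null: "post \<mu> h i (advF h i \<inter> {x. \<beta> < x}) = 0"
    using assms(3-5) unfolding ensures_le_def by blast
  have "exp (c - Cost) \<le> post \<mu> h i (advF h i)"
    using F(2,3) by (rule exp_le_of_cost_le)
  also have "\<dots> \<le> post \<mu> h i {x. x \<le> \<beta>} + post \<mu> h i (advF h i \<inter> {x. \<beta> < x})"
    using assms(1) F(1) by (intro post_le_add) auto
  finally show ?thesis
    using null by simp
qed

lemma true_val_ge_exp_cost:
  assumes res: "reservoir \<mu>" and bs: "batch_seq B" and ns: "N_sample_alg B N alg"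
    and st: "strength_le \<mu> B alg advB advF Cost" and en: "ensures_le \<mu> B alg advB advF \<beta>"
  shows "dreach \<mu> B alg advB h c \<Longrightarrow> N - total_samples h < k \<Longrightarrow>
    exp (c - Cost) \<le> true_val \<mu> B alg \<beta> k h"
proof (induction k arbitrary: h c)
  case (Suc k)
  have "exp (c - Cost) \<le> action_value \<mu> B alg \<beta> k h a" if a: "a \<in> set_pmf (alg h)" for a
  proof (cases a)
    case (Output i)
    then show ?thesis
      using output_value_ge_exp_cost[OF res st en Suc.prems(1)] a by (simp add: action_value_def)
  next
    case (Sample i)
    let ?D = "decl_prob \<mu> B h i (advB h i)"
    have D: "0 < ?D"
      using st Suc.prems(1) a Sample unfolding strength_le_def by blast
    have "total_samples h + batch_size B h i \<le> N"
      using ns a Sample unfolding N_sample_alg_def by blast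
    moreover have "0 < batch_size B h i"
      using bs Suc.prems(1) by (rule dreach_batch_size_pos)
    ultimately have budget: "N - total_samples (h @ [(i, \<omega>)]) < k"
      if "length \<omega> = batch_size B h i" for \<omega>
      using that Suc.prems(2) by (simp add: total_samples_snoc)
    have "exp (c - Cost) / ?D \<le> true_val \<mu> B alg \<beta> k (h @ [(i, \<omega>)])"
      if \<omega>: "\<omega> \<in> {\<omega>. length \<omega> = batch_size B h i} \<inter> advB h i" "0 < pred \<mu> h i \<omega>" for \<omega>
    proof -
      have "dreach \<mu> B alg advB (h @ [(i, \<omega>)]) (c + ln (1 / ?D))"
        using Suc.prems(1) a Sample \<omega> by (intro dreach.step) auto
      then have "exp (c + ln (1 / ?D) - Cost) \<le> true_val \<mu> B alg \<beta> k (h @ [(i, \<omega>)])"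
        using budget \<omega>(1) by (intro Suc.IH) auto
      moreover have "exp (c + ln (1 / ?D) - Cost) = exp (c - Cost) / ?D"
        using D by (simp add: exp_add exp_diff)
      ultimately show ?thesis
        by simp
    qed
    then show ?thesis
      unfolding Sample action_value_def act.case using D
      by (intro weighted_sum_ge_of_event_bound)
         (auto simp: decl_prob_def finite_bool_lists_length pred_nonneg[OF res] true_val_bounds[OF res])
  qed
  moreover have "\<bar>action_value \<mu> B alg \<beta> k h a\<bar> \<le> 1" for a
    using action_value_bounds[OF res true_val_bounds[OF res]] by (simp add: abs_le_iff)
  ultimately show ?case
    unfolding true_val_Suc
    by (intro measure_pmf.integral_ge_const integrable_measure_pmf_bounded[where K = 1])
       (auto simp: AE_measure_pmf_iff)
qed simp

theorem lemma3p5: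
  fixes \<mu> :: "real measure" and \<beta> Cost :: real and B :: "nat \<Rightarrow> nat" and N :: nat
    and alg :: "hist \<Rightarrow> act pmf"
    and advB :: "hist \<Rightarrow> nat \<Rightarrow> bool list set" and advF :: "hist \<Rightarrow> nat \<Rightarrow> real set"
  assumes "reservoir \<mu>"
    and "0 \<le> \<beta>" and "\<beta> \<le> 1"
    and "batch_seq B"
    and "N_sample_alg B N alg"
    and "strength_le \<mu> B alg advB advF Cost"
    and "ensures_le \<mu> B alg advB advF \<beta>"
  shows "success_prob \<mu> B N alg \<beta> \<ge> exp (- Cost)"
proof -
  have "exp (0 - Cost) \<le> true_val \<mu> B alg \<beta> (Suc N) []"
    by (rule true_val_ge_exp_cost[OF assms(1,4-7)]) (auto intro: dreach.start)
  then show ?thesis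
    by (simp add: success_prob_def)
qed

end
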